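(* Let $A$ be an $n\times n$ complex matrix, let $B=A-\frac{\operatorname{tr}A}{n}I$, and let $r$ be a positive integer. Then $$\operatorname{spd}(A)^{2r}\le 2^{2r-1}\operatorname{tr}\big(B^r(B^* )^r\big).$$
   Context: For $A$ with eigenvalues $\lambda_1,\dots,\lambda_n$ (counted with multiplicity), the spread is $\operatorname{spd}(A)=\max_{i,j}|\lambda_i-\lambda_j|$. $B^*$ is the conjugate transpose of $B$. *)

theory Defs
  imports "Jordan_Normal_Form.Schur_Decomposition"
begin

definition mtrace :: "'a::comm_ring_1 mat \<Rightarrow> 'a" where
  "mtrace A = (\<Sum>i<dim_row A. A $$ (i, i))"

text \<open>Spread of a square complex matrix: the maximal distance between two
eigenvalues (eigenvalues are the roots of the characteristic polynomial; the
maximum over the multiset equals the maximum over the set of eigenvalues).\<close>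
definition spd :: "complex mat \<Rightarrow> real" where
  "spd A = Max {cmod (x - y) | x y. eigenvalue A x \<and> eigenvalue A y}"

end

theory Submission
  imports Defs "Jordan_Normal_Form.Spectral_Radius"
begin

text \<open>Let \<open>x \<noteq> y\<close> be eigenvalues of \<open>A\<close> with \<open>spd A = \<bar>x - y\<bar>\<close>, and put \<open>c = tr A / n\<close>.
Eigenvectors \<open>v, w\<close> of \<open>A\<close> for \<open>x, y\<close> are linearly independent eigenvectors of \<open>M = B\<^sup>r\<close> for
\<open>(x - c)\<^sup>r\<close> and \<open>(y - c)\<^sup>r\<close>. Gram--Schmidt turns \<open>v, w\<close> into an orthonormal pair \<open>u\<^sub>1, u\<^sub>2\<close>
with \<open>\<langle>M u\<^sub>1, u\<^sub>1\<rangle> = (x - c)\<^sup>r\<close> and \<open>\<langle>M u\<^sub>2, u\<^sub>2\<rangle> = (y - c)\<^sup>r\<close>, and Bessel's inequality,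
applied to the columns \<open>M u\<^sub>k\<close> and to the rows of \<open>M\<close>, bounds \<open>\<bar>x - c\<bar>\<^sup>2\<^sup>r + \<bar>y - c\<bar>\<^sup>2\<^sup>r\<close>
by the squared Frobenius norm \<open>tr (M M\<^sup>*) = tr (B\<^sup>r (B\<^sup>*)\<^sup>r)\<close>. Convexity of \<open>t \<mapsto> t\<^sup>2\<^sup>r\<close> gives
\<open>\<bar>x - y\<bar>\<^sup>2\<^sup>r \<le> (\<bar>x - c\<bar> + \<bar>y - c\<bar>)\<^sup>2\<^sup>r \<le> 2\<^sup>2\<^sup>r\<^sup>-\<^sup>1 (\<bar>x - c\<bar>\<^sup>2\<^sup>r + \<bar>y - c\<bar>\<^sup>2\<^sup>r)\<close>.\<close>

text \<open>Vectors of \<open>\<complex>\<^sup>n\<close> are handled as coordinate functions read on \<open>{..<n}\<close>, which keeps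
carrier side conditions out of the Gram--Schmidt and Bessel arguments.\<close>

definition cinner :: "nat \<Rightarrow> (nat \<Rightarrow> complex) \<Rightarrow> (nat \<Rightarrow> complex) \<Rightarrow> complex" where
  "cinner n f g = (\<Sum>j<n. f j * cnj (g j))"

lemma cinner_commute: "cinner n g f = cnj (cinner n f g)"
  unfolding cinner_def by (simp add: mult.commute)

lemma cinner_cnj: "cinner n (\<lambda>j. cnj (f j)) (\<lambda>j. cnj (g j)) = cnj (cinner n f g)"
  unfolding cinner_def by simp

lemma cinner_scale_left: "cinner n (\<lambda>j. c * f j) g = c * cinner n f g"
  unfolding cinner_def by (simp add: sum_distrib_left algebra_simps)

lemma cinner_scale_right: "cinner n f (\<lambda>j. c * g j) = cnj c * cinner n f g"
  unfolding cinner_def by (simp add: sum_distrib_left algebra_simps)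

lemma cinner_diff_left: "cinner n (\<lambda>j. f j - c * g j) h = cinner n f h - c * cinner n g h"
  unfolding cinner_def by (simp add: algebra_simps sum_subtractf sum_distrib_left)

lemma cinner_diff_right: "cinner n h (\<lambda>j. f j - c * g j) = cinner n h f - cnj c * cinner n h g"
  unfolding cinner_def by (simp add: algebra_simps sum_subtractf sum_distrib_left)

lemma cinner_cong_left: "(\<And>j. j < n \<Longrightarrow> f j = f' j) \<Longrightarrow> cinner n f g = cinner n f' g"
  unfolding cinner_def by (rule sum.cong) auto

lemma cinner_self: "cinner n f f = of_real (\<Sum>j<n. (cmod (f j))\<^sup>2)"
  by (simp only: cinner_def of_real_sum complex_norm_square)

lemma Re_cinner_self: "Re (cinner n f f) = (\<Sum>j<n. (cmod (f j))\<^sup>2)"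
  by (simp add: cinner_self)

lemma Re_cinner_self_nonneg: "0 \<le> Re (cinner n f f)"
  by (simp add: Re_cinner_self sum_nonneg)

lemma cinner_self_eq_0D:
  assumes "cinner n f f = 0" and "j < n"
  shows "f j = 0"
proof -
  have "(\<Sum>j<n. (cmod (f j))\<^sup>2) = 0"
    using assms(1) unfolding cinner_self by (simp only: of_real_eq_0_iff)
  with assms(2) show ?thesis
    by (simp add: sum_nonneg_eq_0_iff)
qed

lemma Re_cinner_self_remove_component:
  fixes a w :: "nat \<Rightarrow> complex"
  assumes "cinner n w w = 1"
  defines "c \<equiv> cinner n a w"
  shows "Re (cinner n (\<lambda>j. a j - c * w j) (\<lambda>j. a j - c * w j)) = Re (cinner n a a) - (cmod c)\<^sup>2"
proof -
  have "cinner n (\<lambda>j. a j - c * w j) w = 0"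
    using assms by (simp add: cinner_diff_left)
  then have "cinner n (\<lambda>j. a j - c * w j) (\<lambda>j. a j - c * w j) = cinner n a a - c * cnj c"
    by (simp add: cinner_diff_left cinner_diff_right cinner_commute[of n w a] c_def)
  then show ?thesis
    by (simp flip: complex_norm_square)
qed

lemma cmod_cinner_unit_sq_le:
  assumes "cinner n w w = 1"
  shows "(cmod (cinner n a w))\<^sup>2 \<le> Re (cinner n a a)"
  using Re_cinner_self_remove_component[OF assms, of a] Re_cinner_self_nonneg[of n "\<lambda>j. a j - cinner n a w * w j"] by linarith

lemma bessel_inequality_pair:
  assumes "cinner n w\<^sub>1 w\<^sub>1 = 1" "cinner n w\<^sub>2 w\<^sub>2 = 1" "cinner n w\<^sub>1 w\<^sub>2 = 0"
  shows "(cmod (cinner n a w\<^sub>1))\<^sup>2 + (cmod (cinner n a w\<^sub>2))\<^sup>2 \<le> Re (cinner n a a)"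
proof -
  define e where "e = (\<lambda>j. a j - cinner n a w\<^sub>1 * w\<^sub>1 j)"
  have "cinner n e w\<^sub>2 = cinner n a w\<^sub>2"
    using assms(3) by (simp add: e_def cinner_diff_left)
  then have "(cmod (cinner n a w\<^sub>2))\<^sup>2 \<le> Re (cinner n e e)"
    using cmod_cinner_unit_sq_le[OF assms(2), of e] by simp
  also have "\<dots> = Re (cinner n a a) - (cmod (cinner n a w\<^sub>1))\<^sup>2"
    unfolding e_def by (rule Re_cinner_self_remove_component[OF assms(1)])
  finally show ?thesis
    by simp
qed

lemma cinner_normalize:
  assumes "cinner n f f \<noteq> 0"
  obtains s where "cinner n (\<lambda>j. s * f j) (\<lambda>j. s * f j) = 1"
proof
  define R where "R = (\<Sum>j<n. (cmod (f j))\<^sup>2)"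
  have f: "cinner n f f = of_real R"
    unfolding R_def by (rule cinner_self)
  have "R \<ge> 0"
    unfolding R_def by (simp add: sum_nonneg)
  moreover have "R \<noteq> 0"
    using assms f by auto
  ultimately have "R > 0"
    by simp
  define s where "s = complex_of_real (1 / sqrt R)"
  have "cinner n (\<lambda>j. s * f j) (\<lambda>j. s * f j) = s * cnj s * cinner n f f"
    by (simp add: cinner_scale_left cinner_scale_right mult.assoc)
  also have "\<dots> = of_real (1 / sqrt R * (1 / sqrt R) * R)"
    by (simp only: s_def f complex_cnj_complex_of_real of_real_mult)
  also have "\<dots> = 1"
    using \<open>R > 0\<close> by (simp add: field_simps)
  finally show "cinner n (\<lambda>j. s * f j) (\<lambda>j. s * f j) = 1" .
qed

lemma gram_schmidt_pair:
  assumes f: "cinner n f f \<noteq> 0" and independent: "\<And>c. \<exists>j<n. g j \<noteq> c * f j"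
  obtains u\<^sub>1 u\<^sub>2 a b c
  where "u\<^sub>1 = (\<lambda>j. a * f j)" "u\<^sub>2 = (\<lambda>j. b * (g j - c * u\<^sub>1 j))"
    "cinner n u\<^sub>1 u\<^sub>1 = 1" "cinner n u\<^sub>2 u\<^sub>2 = 1" "cinner n u\<^sub>1 u\<^sub>2 = 0"
proof -
  obtain a where a: "cinner n (\<lambda>j. a * f j) (\<lambda>j. a * f j) = 1"
    using cinner_normalize[OF f] by blast
  define u\<^sub>1 where "u\<^sub>1 = (\<lambda>j. a * f j)"
  define c where "c = cinner n g u\<^sub>1"
  define h where "h = (\<lambda>j. g j - c * u\<^sub>1 j)"
  have h_u\<^sub>1: "cinner n h u\<^sub>1 = 0"
    using a by (simp add: h_def c_def u\<^sub>1_def cinner_diff_left)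
  have "cinner n h h \<noteq> 0"
  proof
    assume "cinner n h h = 0"
    then have "g j = (c * a) * f j" if "j < n" for j
      using cinner_self_eq_0D[OF _ that, of h] by (simp add: h_def u\<^sub>1_def)
    with independent show False
      by blast
  qed
  then obtain b where b: "cinner n (\<lambda>j. b * h j) (\<lambda>j. b * h j) = 1"
    using cinner_normalize by blast
  define u\<^sub>2 where "u\<^sub>2 = (\<lambda>j. b * (g j - c * u\<^sub>1 j))"
  have "cinner n u\<^sub>1 u\<^sub>2 = 0"
    using h_u\<^sub>1 cinner_commute[of n u\<^sub>1 h] by (simp add: u\<^sub>2_def h_def cinner_scale_right)
  with a b show thesis
    by (intro that[OF u\<^sub>1_def u\<^sub>2_def]) (simp_all add: u\<^sub>1_def u\<^sub>2_def h_def)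
qed

definition mult_mat_fun :: "nat \<Rightarrow> complex mat \<Rightarrow> (nat \<Rightarrow> complex) \<Rightarrow> nat \<Rightarrow> complex" where
  "mult_mat_fun n M f i = (\<Sum>j<n. M $$ (i, j) * f j)"

lemma mult_mat_fun_scale: "mult_mat_fun n M (\<lambda>j. c * f j) i = c * mult_mat_fun n M f i"
  unfolding mult_mat_fun_def by (simp add: sum_distrib_left algebra_simps)

lemma mult_mat_fun_diff:
  "mult_mat_fun n M (\<lambda>j. f j - c * g j) i = mult_mat_fun n M f i - c * mult_mat_fun n M g i"
  unfolding mult_mat_fun_def by (simp add: sum_distrib_left sum_subtractf algebra_simps)

lemma mult_mat_fun_eq_cinner_row: "mult_mat_fun n M f i = cinner n (\<lambda>j. M $$ (i, j)) (\<lambda>j. cnj (f j))"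
  unfolding mult_mat_fun_def cinner_def by simp

lemma mult_mat_vec_index_eq_mult_mat_fun:
  assumes "M \<in> carrier_mat n n" "v \<in> carrier_vec n" "i < n"
  shows "(M *\<^sub>v v) $ i = mult_mat_fun n M (\<lambda>j. v $ j) i"
  using assms by (simp add: mult_mat_fun_def scalar_prod_def lessThan_atLeast0)

definition frobenius_sq :: "complex mat \<Rightarrow> real" where
  "frobenius_sq M = (\<Sum>i<dim_row M. \<Sum>j<dim_col M. (cmod (M $$ (i, j)))\<^sup>2)"

lemma frobenius_sq_nonneg: "0 \<le> frobenius_sq M"
  unfolding frobenius_sq_def by (intro sum_nonneg) simp

text \<open>Bessel's inequality is applied once to the vectors \<open>M u\<^sub>k\<close> and once to each row of \<open>M\<close>
against the orthonormal pair \<open>conj u\<^sub>1, conj u\<^sub>2\<close>.\<close>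

lemma cmod_rayleigh_pair_sq_le_frobenius_sq:
  assumes M: "M \<in> carrier_mat n n"
    and u: "cinner n u\<^sub>1 u\<^sub>1 = 1" "cinner n u\<^sub>2 u\<^sub>2 = 1" "cinner n u\<^sub>1 u\<^sub>2 = 0"
  shows "(cmod (cinner n (mult_mat_fun n M u\<^sub>1) u\<^sub>1))\<^sup>2 + (cmod (cinner n (mult_mat_fun n M u\<^sub>2) u\<^sub>2))\<^sup>2
    \<le> frobenius_sq M"
proof -
  have rows: "(cmod (mult_mat_fun n M u\<^sub>1 i))\<^sup>2 + (cmod (mult_mat_fun n M u\<^sub>2 i))\<^sup>2
      \<le> (\<Sum>j<n. (cmod (M $$ (i, j)))\<^sup>2)" for i
    using bessel_inequality_pair[of n "\<lambda>j. cnj (u\<^sub>1 j)" "\<lambda>j. cnj (u\<^sub>2 j)" "\<lambda>j. M $$ (i, j)"] u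
    by (simp add: cinner_cnj mult_mat_fun_eq_cinner_row Re_cinner_self)
  have "(cmod (cinner n (mult_mat_fun n M u\<^sub>1) u\<^sub>1))\<^sup>2 + (cmod (cinner n (mult_mat_fun n M u\<^sub>2) u\<^sub>2))\<^sup>2
      \<le> (\<Sum>i<n. (cmod (mult_mat_fun n M u\<^sub>1 i))\<^sup>2) + (\<Sum>i<n. (cmod (mult_mat_fun n M u\<^sub>2 i))\<^sup>2)"
    using cmod_cinner_unit_sq_le[OF u(1), of "mult_mat_fun n M u\<^sub>1"]
      cmod_cinner_unit_sq_le[OF u(2), of "mult_mat_fun n M u\<^sub>2"]
    by (simp add: Re_cinner_self)
  also have "\<dots> \<le> (\<Sum>i<n. \<Sum>j<n. (cmod (M $$ (i, j)))\<^sup>2)"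
    unfolding sum.distrib[symmetric] by (intro sum_mono rows)
  also have "\<dots> = frobenius_sq M"
    using M by (simp add: frobenius_sq_def)
  finally show ?thesis .
qed

lemma eigenvalue_pair_sq_le_frobenius_sq:
  assumes M: "M \<in> carrier_mat n n"
    and v: "eigenvector M v p" and w: "eigenvector M w q"
    and not_parallel: "\<And>c. w \<noteq> c \<cdot>\<^sub>v v"
  shows "(cmod p)\<^sup>2 + (cmod q)\<^sup>2 \<le> frobenius_sq M"
proof -
  from v w M have carrier: "v \<in> carrier_vec n" "w \<in> carrier_vec n"
    and "v \<noteq> 0\<^sub>v n" and Mv: "M *\<^sub>v v = p \<cdot>\<^sub>v v" and Mw: "M *\<^sub>v w = q \<cdot>\<^sub>v w"
    unfolding eigenvector_def by auto
  define f where "f = (\<lambda>j. v $ j)"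
  define g where "g = (\<lambda>j. w $ j)"
  have Mf: "mult_mat_fun n M f i = p * f i" and Mg: "mult_mat_fun n M g i = q * g i" if "i < n" for i
    using mult_mat_vec_index_eq_mult_mat_fun[OF M _ that] carrier Mv Mw that
    by (auto simp: f_def g_def dest: arg_cong[where f = "\<lambda>x. x $ i"])
  obtain j\<^sub>0 where "j\<^sub>0 < n" "f j\<^sub>0 \<noteq> 0"
    using \<open>v \<noteq> 0\<^sub>v n\<close> carrier unfolding f_def by (metis eq_vecI carrier_vecD index_zero_vec)
  then have "cinner n f f \<noteq> 0"
    using cinner_self_eq_0D by blast
  moreover have "\<exists>j<n. g j \<noteq> c * f j" for c
    using not_parallel[of c] carrier by (auto simp: f_def g_def)
  ultimately obtain u\<^sub>1 u\<^sub>2 a b c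
    where u\<^sub>1: "u\<^sub>1 = (\<lambda>j. a * f j)" and u\<^sub>2: "u\<^sub>2 = (\<lambda>j. b * (g j - c * u\<^sub>1 j))"
      and u: "cinner n u\<^sub>1 u\<^sub>1 = 1" "cinner n u\<^sub>2 u\<^sub>2 = 1" "cinner n u\<^sub>1 u\<^sub>2 = 0"
    by (rule gram_schmidt_pair)
  have "cinner n (mult_mat_fun n M u\<^sub>1) u\<^sub>1 = cinner n (\<lambda>i. p * u\<^sub>1 i) u\<^sub>1"
    by (rule cinner_cong_left) (simp add: u\<^sub>1 mult_mat_fun_scale Mf)
  then have "cinner n (mult_mat_fun n M u\<^sub>1) u\<^sub>1 = p"
    using u by (simp add: cinner_scale_left)
  moreover
  have "cinner n (mult_mat_fun n M u\<^sub>2) u\<^sub>2 = cinner n (\<lambda>i. q * u\<^sub>2 i - (b * c * (p - q)) * u\<^sub>1 i) u\<^sub>2"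
    by (rule cinner_cong_left)
      (simp add: u\<^sub>1 u\<^sub>2 mult_mat_fun_scale mult_mat_fun_diff Mf Mg algebra_simps)
  then have "cinner n (mult_mat_fun n M u\<^sub>2) u\<^sub>2 = q"
    using u by (simp add: cinner_diff_left cinner_scale_left)
  ultimately show ?thesis
    using cmod_rayleigh_pair_sq_le_frobenius_sq[OF M u] by simp
qed

lemma smult_mult_mat_vec:
  assumes "A \<in> carrier_mat nr nc" and "v \<in> carrier_vec nc"
  shows "(c \<cdot>\<^sub>m A) *\<^sub>v v = c \<cdot>\<^sub>v (A *\<^sub>v v)"
  using assms by (intro eq_vecI) (auto simp: scalar_prod_def sum_distrib_left ac_simps)

lemma eigenvalue_shift:
  assumes A: "A \<in> carrier_mat n n" and "eigenvalue A t"
  shows "eigenvalue (A - c \<cdot>\<^sub>m 1\<^sub>m n) (t - c)"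
proof -
  from assms obtain v where carrier: "v \<in> carrier_vec n" and "v \<noteq> 0\<^sub>v n"
    and Av: "A *\<^sub>v v = t \<cdot>\<^sub>v v"
    unfolding eigenvalue_def eigenvector_def by auto
  have "(A - c \<cdot>\<^sub>m 1\<^sub>m n) *\<^sub>v v = A *\<^sub>v v - (c \<cdot>\<^sub>m 1\<^sub>m n) *\<^sub>v v"
    using A carrier by (intro minus_mult_distrib_mat_vec) auto
  also have "\<dots> = (t - c) \<cdot>\<^sub>v v"
    using carrier Av by (intro eq_vecI) (auto simp: smult_mult_mat_vec[of _ n n] algebra_simps)
  finally show ?thesis
    using A carrier \<open>v \<noteq> 0\<^sub>v n\<close> unfolding eigenvalue_def eigenvector_def by auto
qed

lemma eigenvector_pow_mat:
  assumes A: "A \<in> carrier_mat n n" and v: "eigenvector A v k"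
  shows "eigenvector (A ^\<^sub>m i) v (k ^ i)"
proof -
  from v A have "v \<in> carrier_vec n" "v \<noteq> 0\<^sub>v n"
    unfolding eigenvector_def by auto
  with eigenvector_pow[OF A v, of i] A show ?thesis
    unfolding eigenvector_def by simp
qed

lemma eigenvectors_distinct_eigenvalues_not_parallel:
  fixes B :: "'a :: field mat"
  assumes B: "B \<in> carrier_mat n n"
    and v: "eigenvector B v x" and w: "eigenvector B w y" and "x \<noteq> y"
  shows "w \<noteq> c \<cdot>\<^sub>v v"
proof
  assume w_eq: "w = c \<cdot>\<^sub>v v"
  from v w B have carrier: "v \<in> carrier_vec n" "w \<in> carrier_vec n" and "w \<noteq> 0\<^sub>v n"
    and Bv: "B *\<^sub>v v = x \<cdot>\<^sub>v v" and Bw: "B *\<^sub>v w = y \<cdot>\<^sub>v w"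
    unfolding eigenvector_def by auto
  then obtain j where j: "j < n" "w $ j \<noteq> 0"
    using carrier by (metis eq_vecI carrier_vecD index_zero_vec)
  have "y \<cdot>\<^sub>v w = c \<cdot>\<^sub>v (B *\<^sub>v v)"
    using Bw mult_mat_vec[OF B carrier(1)] by (simp add: w_eq)
  also have "\<dots> = c \<cdot>\<^sub>v (x \<cdot>\<^sub>v v)"
    by (simp add: Bv)
  finally have "y \<cdot>\<^sub>v w = c \<cdot>\<^sub>v (x \<cdot>\<^sub>v v)" .
  then have "(y \<cdot>\<^sub>v w) $ j = (c \<cdot>\<^sub>v (x \<cdot>\<^sub>v v)) $ j"
    by simp
  then have "y * w $ j = x * w $ j"
    using j carrier by (simp add: w_eq mult.left_commute)
  with j \<open>x \<noteq> y\<close> show False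
    by simp
qed

lemma mat_adjoint_carrier: "M \<in> carrier_mat n m \<Longrightarrow> mat_adjoint M \<in> carrier_mat m n"
  unfolding mat_adjoint_def carrier_mat_def by simp

lemma mat_adjoint_index:
  "M \<in> carrier_mat n m \<Longrightarrow> i < m \<Longrightarrow> j < n \<Longrightarrow> mat_adjoint M $$ (i, j) = cnj (M $$ (j, i))"
  unfolding mat_adjoint_def carrier_mat_def by (simp add: mat_of_rows_index)

lemma mat_adjoint_mult:
  fixes A B :: "complex mat"
  assumes A: "A \<in> carrier_mat n m" and B: "B \<in> carrier_mat m k"
  shows "mat_adjoint (A * B) = mat_adjoint B * mat_adjoint A"
proof (rule eq_matI)
  have AB: "A * B \<in> carrier_mat n k"
    using A B by simp
  note carrier = mat_adjoint_carrier[OF A] mat_adjoint_carrier[OF B] mat_adjoint_carrier[OF AB]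
  fix i j assume "i < dim_row (mat_adjoint B * mat_adjoint A)" "j < dim_col (mat_adjoint B * mat_adjoint A)"
  then have i: "i < k" and j: "j < n"
    using carrier by auto
  have "mat_adjoint (A * B) $$ (i, j) = cnj (\<Sum>l = 0..<m. A $$ (j, l) * B $$ (l, i))"
    using mat_adjoint_index[OF AB i j] A B i j by (simp add: scalar_prod_def)
  also have "\<dots> = (\<Sum>l = 0..<m. mat_adjoint B $$ (i, l) * mat_adjoint A $$ (l, j))"
    by (simp add: mat_adjoint_index[OF A] mat_adjoint_index[OF B] i j mult.commute)
  also have "\<dots> = (mat_adjoint B * mat_adjoint A) $$ (i, j)"
    using carrier i j by (simp add: scalar_prod_def)
  finally show "mat_adjoint (A * B) $$ (i, j) = (mat_adjoint B * mat_adjoint A) $$ (i, j)" .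
qed (use mat_adjoint_carrier[OF A] mat_adjoint_carrier[OF B] mat_adjoint_carrier[of "A * B" n k] A B
    in simp_all)

lemma mat_adjoint_one: "mat_adjoint (1\<^sub>m n :: complex mat) = 1\<^sub>m n"
  using mat_adjoint_carrier[of "1\<^sub>m n :: complex mat" n n]
  by (intro eq_matI) (auto simp: mat_adjoint_index[of _ n n])

lemma pow_mat_Suc_left:
  assumes A: "A \<in> carrier_mat n n"
  shows "A ^\<^sub>m Suc k = A * A ^\<^sub>m k"
proof (induction k)
  case 0
  then show ?case
    using A by simp
next
  case (Suc k)
  have "A ^\<^sub>m Suc (Suc k) = (A * A ^\<^sub>m k) * A"
    using Suc by simp
  also have "\<dots> = A * A ^\<^sub>m Suc k"
    using A by (simp add: assoc_mult_mat[of _ n n _ n _ n])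
  finally show ?case .
qed

lemma mat_adjoint_pow:
  fixes B :: "complex mat"
  assumes B: "B \<in> carrier_mat n n"
  shows "mat_adjoint (B ^\<^sub>m r) = mat_adjoint B ^\<^sub>m r"
proof (induction r)
  case 0
  then show ?case
    using B mat_adjoint_one[of n] mat_adjoint_carrier[OF B] by simp
next
  case (Suc r)
  have "mat_adjoint (B ^\<^sub>m Suc r) = mat_adjoint B * mat_adjoint (B ^\<^sub>m r)"
    using mat_adjoint_mult[OF pow_carrier_mat[OF B] B] by simp
  also have "\<dots> = mat_adjoint B ^\<^sub>m Suc r"
    using Suc pow_mat_Suc_left[OF mat_adjoint_carrier[OF B]] by simp
  finally show ?case .
qed

lemma Re_mtrace_mult_mat_adjoint:
  assumes M: "M \<in> carrier_mat n m"
  shows "Re (mtrace (M * mat_adjoint M)) = frobenius_sq M"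
proof -
  have "mtrace (M * mat_adjoint M) = (\<Sum>i<n. \<Sum>j<m. of_real ((cmod (M $$ (i, j)))\<^sup>2))"
    unfolding mtrace_def complex_norm_square using M mat_adjoint_carrier[OF M]
    by (auto simp: scalar_prod_def mat_adjoint_index[OF M] lessThan_atLeast0 intro!: sum.cong)
  then show ?thesis
    using M by (simp add: frobenius_sq_def)
qed

lemma distinct_eigenvalues_pow_sq_le_frobenius_sq:
  fixes B :: "complex mat"
  assumes B: "B \<in> carrier_mat n n" and "eigenvalue B x" "eigenvalue B y" "x \<noteq> y"
  shows "(cmod (x ^ r))\<^sup>2 + (cmod (y ^ r))\<^sup>2 \<le> frobenius_sq (B ^\<^sub>m r)"
proof -
  obtain v w where v: "eigenvector B v x" and w: "eigenvector B w y"
    using assms unfolding eigenvalue_def by blast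
  show ?thesis
    by (rule eigenvalue_pair_sq_le_frobenius_sq[OF pow_carrier_mat[OF B]
          eigenvector_pow_mat[OF B v] eigenvector_pow_mat[OF B w]])
      (rule eigenvectors_distinct_eigenvalues_not_parallel[OF B v w \<open>x \<noteq> y\<close>])
qed

lemma add_power_le_two_power_mult:
  fixes a b :: real
  assumes "0 \<le> a" "0 \<le> b" "m \<ge> 1"
  shows "(a + b) ^ m \<le> 2 ^ (m - 1) * (a ^ m + b ^ m)"
  using assms(3)
proof (induction m rule: dec_induct)
  case base
  then show ?case
    by simp
next
  case (step m)
  have "0 \<le> (a ^ m - b ^ m) * (a - b)"
    using assms(1,2) power_mono[of a b m] power_mono[of b a m]
    by (cases "a \<le> b") (auto intro: mult_nonpos_nonpos)
  then have chebyshev: "(a ^ m + b ^ m) * (a + b) \<le> 2 * (a ^ Suc m + b ^ Suc m)"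
    by (simp add: algebra_simps)
  have "(a + b) ^ Suc m = (a + b) ^ m * (a + b)"
    by simp
  also have "\<dots> \<le> 2 ^ (m - 1) * (a ^ m + b ^ m) * (a + b)"
    using step.IH assms(1,2) by (intro mult_right_mono) auto
  also have "\<dots> \<le> 2 ^ (m - 1) * (2 * (a ^ Suc m + b ^ Suc m))"
    using chebyshev by (simp add: mult.assoc)
  also have "\<dots> = 2 ^ (Suc m - 1) * (a ^ Suc m + b ^ Suc m)"
    using step.hyps by (cases m) auto
  finally show ?case .
qed

lemma cmod_diff_power_le:
  fixes x y c :: complex
  assumes "r > 0"
  shows "cmod (x - y) ^ (2 * r) \<le> 2 ^ (2 * r - 1) * ((cmod ((x - c) ^ r))\<^sup>2 + (cmod ((y - c) ^ r))\<^sup>2)"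
proof -
  have "cmod (x - y) \<le> cmod (x - c) + cmod (y - c)"
    using norm_triangle_ineq4[of "x - c" "y - c"] by simp
  then have "cmod (x - y) ^ (2 * r) \<le> (cmod (x - c) + cmod (y - c)) ^ (2 * r)"
    by (rule power_mono) simp
  also have "\<dots> \<le> 2 ^ (2 * r - 1) * (cmod (x - c) ^ (2 * r) + cmod (y - c) ^ (2 * r))"
    using assms by (intro add_power_le_two_power_mult) auto
  also have "\<dots> = 2 ^ (2 * r - 1) * ((cmod ((x - c) ^ r))\<^sup>2 + (cmod ((y - c) ^ r))\<^sup>2)"
    by (simp add: norm_power power_mult[symmetric] mult.commute)
  finally show ?thesis .
qed

lemma spd_attained:
  assumes "A \<in> carrier_mat n n" "n > 0"
  obtains x y where "eigenvalue A x" "eigenvalue A y" "spd A = cmod (x - y)"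
proof -
  have pairs: "{cmod (x - y) |x y. eigenvalue A x \<and> eigenvalue A y}
      = (\<lambda>(x, y). cmod (x - y)) ` (spectrum A \<times> spectrum A)"
    by (auto simp: spectrum_def)
  have "spd A \<in> (\<lambda>(x, y). cmod (x - y)) ` (spectrum A \<times> spectrum A)"
    unfolding spd_def pairs
    using card_finite_spectrum(1)[OF assms(1)] spectrum_non_empty[OF assms] by (intro Max_in) auto
  with that show thesis
    by (auto simp: spectrum_def)
qed

theorem theorem3p3:
  fixes A :: "complex mat" and n r :: nat
  assumes "A \<in> carrier_mat n n" and "n > 0" and "r > 0"
  defines "B \<equiv> A - (mtrace A / of_nat n) \<cdot>\<^sub>m 1\<^sub>m n"
  shows "spd A ^ (2 * r)
           \<le> 2 ^ (2 * r - 1) * Re (mtrace (B ^\<^sub>m r * (mat_adjoint B) ^\<^sub>m r))"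
proof -
  let ?c = "mtrace A / of_nat n"
  have B: "B \<in> carrier_mat n n"
    unfolding B_def using assms(1) by auto
  obtain x y where x: "eigenvalue A x" and y: "eigenvalue A y" and spd: "spd A = cmod (x - y)"
    using spd_attained[OF assms(1,2)] .
  have "spd A ^ (2 * r) \<le> 2 ^ (2 * r - 1) * frobenius_sq (B ^\<^sub>m r)"
  proof (cases "x = y")
    case True
    then show ?thesis
      using spd frobenius_sq_nonneg[of "B ^\<^sub>m r"] \<open>r > 0\<close> by (simp add: power_0_left)
  next
    case False
    have "(cmod ((x - ?c) ^ r))\<^sup>2 + (cmod ((y - ?c) ^ r))\<^sup>2 \<le> frobenius_sq (B ^\<^sub>m r)"
      using False unfolding B_def
      by (intro distinct_eigenvalues_pow_sq_le_frobenius_sq eigenvalue_shift x y assms(1)) auto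
    then show ?thesis
      using spd cmod_diff_power_le[OF \<open>r > 0\<close>, of x y ?c]
      by (smt (verit) mult_left_mono zero_le_power)
  qed
  moreover have "Re (mtrace (B ^\<^sub>m r * mat_adjoint B ^\<^sub>m r)) = frobenius_sq (B ^\<^sub>m r)"
    using Re_mtrace_mult_mat_adjoint[OF pow_carrier_mat[OF B]] mat_adjoint_pow[OF B] by simp
  ultimately show ?thesis
    by simp
qed

end
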